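(* There exist $U<0$ and constants $0<c\le C$ such that the following holds for every $u_0<U$, every $s\in[0,1]$, and every smooth function $\phi$ on $\overline{\Omega_{u_0}}$ (up to $\mathscr I^+$): $$c\,I_s(\phi)\le\mathcal E_{\mathcal H_{s,u_0}}(\phi)\le C\,I_s(\phi),$$ where $$I_s(\phi)=\int_{]-\infty,u_0[\times S^2}\Big(u^2(\partial_u\phi)^2+\frac{R}{|u|}(\partial_R\phi)^2+|\nabla_{S^2}\phi|^2\Big)\,du\,d^2\omega,$$ the integrand being evaluated on $\mathcal H_{s,u_0}$. For $s=0$ the two quantities coincide, i.e. $\mathcal E_{\mathscr I^+_{u_0}}(\phi)=\int_{]-\infty,u_0[\times S^2}\big(u^2(\partial_u\phi)^2+|\nabla_{S^2}\phi|^2\big)\,du\,d^2\omega$.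
   Context: Fix $M>0$. On the extreme Reissner–Nordström exterior, use the outgoing chart $(u,R,\omega)$, where: - $R=1/r$, $u=t-r_*$, $r_*=r-M+2M\log\frac{r-M}{M}-\frac{M^2}{r-M}$; - the rescaled metric is $\hat g=R^2(1-MR)^2du^2-2\,du\,dR-d\omega^2$, extending to $\mathscr I^+=\{R=0\}$; - $\partial_t$ is future-directed; - $d^2\omega$ denotes the area form of the unit sphere, $\nabla_{S^2}$ its gradient. Regions, for $u_0<0$: - $\Omega_{u_0}=\{t\ge0\}\cap\{u<u_0\}$; - for $0<s\le1$, $\mathcal H_{s,u_0}=\{u=-sr_*\}\cap\{u<u_0\}$, so that $\mathcal H_{1,u_0}=\{t=0\}\cap\{u<u_0\}$; - $\mathcal H_{0,u_0}=\mathscr I^+_{u_0}=\{R=0,\ u<u_0\}$. Each $\mathcal H_{s,u_0}$ is parametrised by $(u,\omega)\in]-\infty,u_0[\times S^2$. Energy flux. Let $T_{ab}(\phi)=\hat\nabla_a\phi\,\hat\nabla_b\phi-\frac12\hat g^{cd}\hat\nabla_c\phi\hat\nabla_d\phi\,\hat g_{ab}$. Let $K=u^2\partial_u-2(1+uR)\partial_R$ be the Morawetz vector field and $J_a(\phi)=K^bT_{ab}(\phi)$. For a spacelike or null hypersurface $\Sigma$, define $$\mathcal E_\Sigma(\phi)=\int_\Sigma J_a(\phi)\tilde n^a\,d\mu,$$ where: - $\tilde n$ is a future-directed normal to $\Sigma$; - $\tilde l$ is transverse to $\Sigma$ with $\hat g(\tilde l,\tilde n)=1$; - $d\mu$ is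 the positive measure induced on $\Sigma$ by $\tilde l\lrcorner(du\wedge dR\wedge d^2\omega)$. This definition is independent of the choice of $\tilde n$ and $\tilde l$. Explicitly, for $0<s\le1$, the integrand being evaluated on $\mathcal H_{s,u_0}$: $$\mathcal E_{\mathcal H_{s,u_0}}(\phi)=\int_{]-\infty,u_0[\times S^2}\Big(R^2(1-MR)^2u^2\,\partial_u\phi\,\partial_R\phi+u^2(\partial_u\phi)^2$$ $$+\frac{R^2(1-MR)^2}{2s}\big((Ru)^2(1-MR)^2+2(2-s)Ru+2(2-s)\big)(\partial_R\phi)^2$$ $$+\Big(Ru+\frac{(Ru)^2(1-MR)^2}{2s}+1\Big)|\nabla_{S^2}\phi|^2\Big)\,du\,d^2\omega.$$ *)

theory Defs
  imports "HOL-Analysis.Analysis"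
begin

coinductive smooth_on :: "('a::real_normed_vector \<Rightarrow> real) \<Rightarrow> 'a set \<Rightarrow> bool" where
  "f differentiable_on S \<Longrightarrow>
   (\<forall>v. smooth_on (\<lambda>x. frechet_derivative f (at x) v) S) \<Longrightarrow> smooth_on f S"

definition rstar :: "real \<Rightarrow> real \<Rightarrow> real" where
  "rstar M r = r - M + 2 * M * ln ((r - M) / M) - M\<^sup>2 / (r - M)"

text \<open>Points are (u, R, x) with x in R^3; the sphere is the unit sphere of R^3.
The closure of Omega_{u0} in the rescaled spacetime (including scri+ = {R = 0}).
Here t = u + r_*, r = 1/R, and the exterior is r > M, i.e. 0 < R < 1/M.\<close>
definition closOmega :: "real \<Rightarrow> real \<Rightarrow> (real \<times> real \<times> (real^3)) set" where
  "closOmega M u0 = {(u, R, \<omega>). \<omega> \<in> sphere 0 1 \<and> u \<le> u0 \<and> 0 \<le> R \<and> R < 1 / M \<and>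
      (R = 0 \<or> u + rstar M (1 / R) \<ge> 0)}"

definition smooth_up_to_scri :: "real \<Rightarrow> real \<Rightarrow> (real \<times> real \<times> (real^3) \<Rightarrow> real) \<Rightarrow> bool" where
  "smooth_up_to_scri M u0 \<phi> \<longleftrightarrow> (\<exists>S. open S \<and> closOmega M u0 \<subseteq> S \<and> smooth_on \<phi> S)"

text \<open>Coordinate partial derivatives and the squared norm of the gradient along the
unit sphere (round metric induced from R^3).\<close>
definition d_u :: "(real \<times> real \<times> (real^3) \<Rightarrow> real) \<Rightarrow> real \<Rightarrow> real \<Rightarrow> real^3 \<Rightarrow> real" where
  "d_u \<phi> u R \<omega> = frechet_derivative \<phi> (at (u, R, \<omega>)) (1, 0, 0)"

definition d_R :: "(real \<times> real \<times> (real^3) \<Rightarrow> real) \<Rightarrow> real \<Rightarrow> real \<Rightarrow> real^3 \<Rightarrow> real" where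
  "d_R \<phi> u R \<omega> = frechet_derivative \<phi> (at (u, R, \<omega>)) (0, 1, 0)"

definition grad_S2_sq :: "(real \<times> real \<times> (real^3) \<Rightarrow> real) \<Rightarrow> real \<Rightarrow> real \<Rightarrow> real^3 \<Rightarrow> real" where
  "grad_S2_sq \<phi> u R \<omega> =
     (SUP v\<in>{v::real^3. inner v \<omega> = 0 \<and> norm v = 1}.
        (frechet_derivative \<phi> (at (u, R, \<omega>)) (0, 0, v))\<^sup>2)"

text \<open>Integration over ]-infinity,u0[ x S^2 with du d^2omega, the area form of the unit
sphere written in spherical coordinates (sin theta dtheta dvartheta).\<close>
definition sph :: "real \<Rightarrow> real \<Rightarrow> real^3" where
  "sph \<theta> \<psi> = vector [sin \<theta> * cos \<psi>, sin \<theta> * sin \<psi>, cos \<theta>]"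

definition int_S2 :: "(real^3 \<Rightarrow> ennreal) \<Rightarrow> ennreal" where
  "int_S2 g = (\<integral>\<^sup>+ \<theta>. \<integral>\<^sup>+ \<psi>. ennreal (sin \<theta>) * g (sph \<theta> \<psi>)
        * indicator {0<..<pi} \<theta> * indicator {0<..<2 * pi} \<psi> \<partial>lborel \<partial>lborel)"

definition int_H :: "real \<Rightarrow> (real \<Rightarrow> real^3 \<Rightarrow> real) \<Rightarrow> ennreal" where
  "int_H u0 f = (\<integral>\<^sup>+ u. indicator {..<u0} u * int_S2 (\<lambda>\<omega>. ennreal (f u \<omega>)) \<partial>lborel)"

text \<open>On H_{s,u0} (0 < s), R is the function of u determined by u = - s r_*(1/R), r > M;
on H_{0,u0} = scri+, R = 0.\<close>
definition Rsurf :: "real \<Rightarrow> real \<Rightarrow> real \<Rightarrow> real" where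
  "Rsurf M s u = (if s = 0 then 0 else 1 / (THE r. r > M \<and> rstar M r = - u / s))"

definition flux_density :: "real \<Rightarrow> real \<Rightarrow> real \<Rightarrow> real \<Rightarrow> real \<Rightarrow> real \<Rightarrow> real \<Rightarrow> real" where
  "flux_density M s u R a b g =
     R\<^sup>2 * (1 - M * R)\<^sup>2 * u\<^sup>2 * a * b + u\<^sup>2 * a\<^sup>2
     + R\<^sup>2 * (1 - M * R)\<^sup>2 / (2 * s) * ((R*u)\<^sup>2 * (1 - M * R)\<^sup>2 + 2*(2 - s)*R*u + 2*(2 - s)) * b\<^sup>2
     + (R*u + (R*u)\<^sup>2 * (1 - M * R)\<^sup>2 / (2 * s) + 1) * g"

text \<open>Geometric flux density J_a n^a = K^b T_ab n^a on scri+ = {R = 0}, computed in the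
(u,R) block of the rescaled metric g = R^2(1-MR)^2 du^2 - 2 du dR - domega^2 with
future-directed normal n = d/du, transverse l = - d/dR (g(l,n) = 1, so that
l contracted into du/\dR/\d^2omega induces du d^2omega).  Here a = d_u phi, b = d_R phi,
g = |grad_S2 phi|^2; K = u^2 d/du - 2(1+uR) d/dR.\<close>
definition scri_flux_density :: "real \<Rightarrow> real \<Rightarrow> real \<Rightarrow> real \<Rightarrow> real \<Rightarrow> real \<Rightarrow> real" where
  "scri_flux_density M u R a b g =
     (let guu = R\<^sup>2 * (1 - M * R)\<^sup>2; guR = -1; gRR = 0;
          iuu = 0; iuR = -1; iRR = - R\<^sup>2 * (1 - M * R)\<^sup>2;
          sq = iuu * a\<^sup>2 + 2 * iuR * a * b + iRR * b\<^sup>2 - g;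
          Tuu = a * a - sq / 2 * guu; TuR = a * b - sq / 2 * guR; TRR = b * b - sq / 2 * gRR;
          Ku = u\<^sup>2; KR = - 2 * (1 + u * R);
          nu = 1; nR = 0
      in nu * (Ku * Tuu + KR * TuR) + nR * (Ku * TuR + KR * TRR))"

definition energy :: "real \<Rightarrow> real \<Rightarrow> real \<Rightarrow> (real \<times> real \<times> (real^3) \<Rightarrow> real) \<Rightarrow> ennreal" where
  "energy M s u0 \<phi> =
     (if s = 0 then
        int_H u0 (\<lambda>u \<omega>. scri_flux_density M u 0 (d_u \<phi> u 0 \<omega>) (d_R \<phi> u 0 \<omega>) (grad_S2_sq \<phi> u 0 \<omega>))
      else
        int_H u0 (\<lambda>u \<omega>. let R = Rsurf M s u in
          flux_density M s u R (d_u \<phi> u R \<omega>) (d_R \<phi> u R \<omega>) (grad_S2_sq \<phi> u R \<omega>)))"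

definition Ienergy :: "real \<Rightarrow> real \<Rightarrow> real \<Rightarrow> (real \<times> real \<times> (real^3) \<Rightarrow> real) \<Rightarrow> ennreal" where
  "Ienergy M s u0 \<phi> =
     int_H u0 (\<lambda>u \<omega>. let R = Rsurf M s u in
        u\<^sup>2 * (d_u \<phi> u R \<omega>)\<^sup>2 + R / \<bar>u\<bar> * (d_R \<phi> u R \<omega>)\<^sup>2 + grad_S2_sq \<phi> u R \<omega>)"

end

theory Submission
  imports Defs "HOL-Real_Asymp.Real_Asymp"
begin

text \<open>On \<open>\<H>\<^sub>s\<close> one has \<open>u = -s r\<^sub>*(1/R)\<close>, and \<open>r\<^sub>* \<sim> r\<close>; so far out, \<open>R u = -s t\<close> with
  \<open>t \<approx> 1\<close> and \<open>MR \<approx> 0\<close>, uniformly in \<open>s \<in> ]0,1]\<close>.  Substituted into the flux density this gives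
  a quadratic form in \<open>u \<partial>\<^sub>u\<phi>\<close>, \<open>R \<partial>\<^sub>R\<phi> / \<surd>s\<close> and \<open>|\<nabla>\<^sub>S\<^sub>2\<phi>|\<close> whose coefficients, once the cross
  term is absorbed by a weighted AM-GM inequality, are bounded above and below independently of
  \<open>s\<close>.  Since \<open>R/|u| = R\<^sup>2/(s t)\<close>, the same three quantities make up \<open>I\<^sub>s\<close>.  On \<open>\<I>\<^sup>+\<close> the flux
  density is exactly \<open>u\<^sup>2 (\<partial>\<^sub>u\<phi>)\<^sup>2 + |\<nabla>\<^sub>S\<^sub>2\<phi>|\<^sup>2\<close>.\<close>

section \<open>The tortoise coordinate\<close>

lemma rstar_less_rstar:
  assumes "0 < M" "M < r" "r < r'"
  shows "rstar M r < rstar M r'"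
proof -
  have "ln ((r - M) / M) \<le> ln ((r' - M) / M)"
    using assms by (simp add: divide_right_mono)
  moreover have "M\<^sup>2 / (r' - M) \<le> M\<^sup>2 / (r - M)"
    using assms by (intro divide_left_mono) auto
  ultimately show ?thesis
    unfolding rstar_def using assms by (smt (verit) mult_left_mono)
qed

lemma rstar_2M [simp]: "0 < M \<Longrightarrow> rstar M (2 * M) = 0"
  by (simp add: rstar_def power2_eq_square)

lemma rstar_ge:
  assumes "0 < M" "2 * M \<le> r"
  shows "r - 2 * M \<le> rstar M r"
proof -
  have "0 \<le> ln ((r - M) / M)" using assms by simp
  moreover have "M\<^sup>2 / (r - M) \<le> M"
    using assms by (simp add: divide_le_eq power2_eq_square)
  ultimately show ?thesis
    unfolding rstar_def using assms by (smt (verit) mult_nonneg_nonneg)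
qed

lemma continuous_on_rstar: "0 < M \<Longrightarrow> continuous_on {M<..} (rstar M)"
  unfolding rstar_def by (intro continuous_intros) auto

lemma ex1_rstar_eq:
  assumes "0 < M" "0 \<le> y"
  shows "\<exists>!r. M < r \<and> rstar M r = y"
proof -
  have "continuous_on {2 * M .. y + 2 * M} (rstar M)"
    using continuous_on_rstar[OF assms(1)] by (rule continuous_on_subset) (use assms in auto)
  then obtain r where "2 * M \<le> r" "rstar M r = y"
    using IVT'[of "rstar M" "2 * M" y "y + 2 * M"] rstar_ge[of M "y + 2 * M"] assms by auto
  then have "M < r \<and> rstar M r = y" using assms by simp
  then show ?thesis
    using rstar_less_rstar[OF assms(1)] by (metis linorder_neqE_linordered_idom less_irrefl)
qed

lemma rstar_asymp: "0 < M \<Longrightarrow> ((\<lambda>r. rstar M r / r) \<longlongrightarrow> 1) at_top"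
  unfolding rstar_def by real_asymp

lemma neg_le_neg_divide:
  fixes s u :: real
  assumes a: "0 < s" "s \<le> 1" "u \<le> 0"
  shows "- u \<le> - u / s"
proof -
  have "u \<le> u * s" using a by (simp add: mult_le_cancel_left1)
  then show ?thesis using a by (simp add: pos_divide_le_eq)
qed

lemma Rsurf_eq_inverse:
  assumes "0 < M" "0 < s" "u \<le> 0"
  obtains r where "M < r" "rstar M r = - u / s" "Rsurf M s u = 1 / r"
proof -
  have "0 \<le> - u / s" using assms by (intro divide_nonneg_pos) auto
  from ex1_rstar_eq[OF assms(1) this] obtain r where r: "M < r" "rstar M r = - u / s"
    by blast
  moreover have "(THE r. M < r \<and> rstar M r = - u / s) = r"
    using ex1_rstar_eq[OF assms(1) \<open>0 \<le> - u / s\<close>] r by (intro the1_equality) auto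
  ultimately show ?thesis using that assms(2) by (simp add: Rsurf_def)
qed

lemma Rsurf_in_closOmega:
  assumes "0 < M" "0 < s" "s \<le> 1" "u \<le> 0" "u \<le> u0" "\<omega> \<in> sphere 0 1"
  shows "(u, Rsurf M s u, \<omega>) \<in> closOmega M u0"
proof -
  obtain r where r: "M < r" "rstar M r = - u / s" "Rsurf M s u = 1 / r"
    using Rsurf_eq_inverse assms by blast
  have "0 \<le> u + rstar M r" using neg_le_neg_divide[of s u] r assms by simp
  moreover have "1 / r < 1 / M" using r assms by (simp add: divide_strict_left_mono)
  ultimately show ?thesis
    using r assms unfolding closOmega_def by simp
qed

definition far_regime :: "real \<Rightarrow> real \<Rightarrow> real \<Rightarrow> bool" where
  "far_regime M s u \<longleftrightarrow> 0 < Rsurf M s u \<and> M * Rsurf M s u \<le> 1/100 \<and>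
     99/100 * s \<le> - (Rsurf M s u * u) \<and> - (Rsurf M s u * u) \<le> 101/100 * s"

lemma Rsurf_asymptotics:
  assumes "0 < M"
  obtains U where "U < 0"
    and "\<And>s u. 0 < s \<Longrightarrow> s \<le> 1 \<Longrightarrow> u < U \<Longrightarrow> far_regime M s u"
proof -
  have "\<forall>\<^sub>F r in at_top. dist (rstar M r / r) 1 < 1/100 \<and> 100 * M < r"
    using tendstoD[OF rstar_asymp[OF assms], of "1/100"] eventually_gt_at_top
    by (auto intro: eventually_conj)
  then obtain N where N: "\<And>r. N \<le> r \<Longrightarrow> \<bar>rstar M r / r - 1\<bar> < 1/100 \<and> 100 * M < r"
    unfolding eventually_at_top_linorder dist_real_def by blast
  define r0 where "r0 = max N (2 * M)"
  show ?thesis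
  proof
    show "- (\<bar>rstar M r0\<bar> + 1) < 0" by simp
    fix s u :: real
    assume s: "0 < s" "s \<le> 1" and u: "u < - (\<bar>rstar M r0\<bar> + 1)"
    have "u \<le> 0" using u by linarith
    then obtain r where r: "M < r" "rstar M r = - u / s" "Rsurf M s u = 1 / r"
      using Rsurf_eq_inverse[OF assms s(1)] by blast
    have "rstar M r0 < rstar M r"
      using neg_le_neg_divide[OF s \<open>u \<le> 0\<close>] r(2) u abs_ge_self[of "rstar M r0"] by linarith
    then have "r0 \<le> r"
      using rstar_less_rstar[OF assms r(1), of r0] by (metis less_asym not_le)
    then have close: "\<bar>rstar M r / r - 1\<bar> < 1/100" and far: "100 * M < r"
      using N[of r] r0_def by simp_all
    have "- (Rsurf M s u * u) = s * (rstar M r / r)"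
      unfolding r(2,3) using s r(1) assms by (simp add: field_simps)
    moreover have "99/100 \<le> rstar M r / r" "rstar M r / r \<le> 101/100"
      using close by linarith+
    then have "99/100 * s \<le> s * (rstar M r / r)" "s * (rstar M r / r) \<le> 101/100 * s"
      using mult_left_mono[of _ _ s] s by (metis less_imp_le mult.commute)+
    moreover have "0 < Rsurf M s u" "M * Rsurf M s u \<le> 1/100"
      unfolding r(3) using r(1) far assms by (simp_all add: field_simps)
    ultimately show "far_regime M s u"
      unfolding far_regime_def by simp
  qed
qed

section \<open>Pointwise comparison of the flux density\<close>

text \<open>After substituting \<open>R u = -s t\<close>, the coefficient of \<open>(\<partial>\<^sub>R\<phi>)\<^sup>2\<close> in the flux density is
  \<open>R\<^sup>2 (1-MR)\<^sup>2/(2s)\<close> times \<open>radial_weight s t (t\<^sup>2 (1-MR)\<^sup>2)\<close>.  The term \<open>2 s\<^sup>3 q / 3\<close>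
  in the bounds below is the price of absorbing the cross term \<open>R\<^sup>2 (1-MR)\<^sup>2 u\<^sup>2 \<partial>\<^sub>u\<phi> \<partial>\<^sub>R\<phi>\<close>
  by the weighted AM-GM inequality \<open>abs_mult_le_weighted_squares\<close>.\<close>

definition radial_weight :: "real \<Rightarrow> real \<Rightarrow> real \<Rightarrow> real" where
  "radial_weight s t q = s\<^sup>2 * q - 2 * (2 - s) * s * t + 2 * (2 - s)"

lemma radial_weight_lower:
  fixes s t q :: real
  assumes s: "0 < s" "s \<le> 1" and t: "\<bar>t - 1\<bar> \<le> 1/100" and q: "\<bar>q - 1\<bar> \<le> 4/100"
  shows "1/5 \<le> radial_weight s t q - 2 * s^3 * q / 3"
proof -
  have damp: "\<bar>c * x\<bar> \<le> e" if "0 \<le> c" "c \<le> 1" "\<bar>x\<bar> \<le> e" for c x e :: real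
    using that mult_left_le_one_le[of "\<bar>x\<bar>" c] by (simp add: abs_mult)
  define w where "w = 1 - s"
  define eq where "eq = s\<^sup>2 * (1 - 2 * s / 3) * (q - 1)"
  define et where "et = (1 - w\<^sup>2) * (t - 1)"
  have "radial_weight s t q - 2 * s^3 * q / 3 = 1/3 + 2 * w + w\<^sup>2 + 2 * w^3 / 3 + eq - 2 * et"
    unfolding radial_weight_def w_def eq_def et_def by algebra
  moreover have "\<bar>eq\<bar> \<le> 4/100"
    unfolding eq_def using s q by (intro damp) (auto simp: power_le_one intro: mult_le_one)
  moreover have "\<bar>et\<bar> \<le> 1/100"
    unfolding et_def w_def using s t by (intro damp) (auto simp: power_le_one)
  moreover have "0 \<le> w" "0 \<le> w\<^sup>2" "0 \<le> w^3" using s by (simp_all add: w_def)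
  ultimately show ?thesis by (simp only: abs_le_iff) linarith
qed

lemma radial_weight_upper:
  fixes s t q :: real
  assumes s: "0 < s" "s \<le> 1" and t: "0 \<le> t" and q: "0 \<le> q" "q \<le> 104/100"
  shows "radial_weight s t q + 2 * s^3 * q / 3 \<le> 8"
proof -
  define k where "k = (2 - s) * s * t"
  have "radial_weight s t q + 2 * s^3 * q / 3 = s\<^sup>2 * q + 2 * (s^3 * q) / 3 + 4 - 2 * s - 2 * k"
    unfolding radial_weight_def k_def by (simp add: algebra_simps)
  moreover have "s\<^sup>2 * q \<le> q" "s^3 * q \<le> q"
    using s q by (auto intro: mult_left_le_one_le simp: power_le_one)
  moreover have "0 \<le> k" using s t by (simp add: k_def)
  ultimately show ?thesis using s q by linarith
qed

lemma flux_density_eq: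
  fixes M s u R a b g t :: real
  assumes "s \<noteq> 0" "R \<noteq> 0" "R * u = - (s * t)"
  shows "flux_density M s u R a b g =
     (u * a)\<^sup>2 + R\<^sup>2 * (1 - M * R)\<^sup>2 * u\<^sup>2 * a * b
     + R\<^sup>2 * b\<^sup>2 / s * ((1 - M * R)\<^sup>2 * radial_weight s t (t\<^sup>2 * (1 - M * R)\<^sup>2) / 2)
     + (1 - s * t + s * (t\<^sup>2 * (1 - M * R)\<^sup>2) / 2) * g"
proof -
  have u: "u = - (s * t) / R" using assms by (simp add: field_simps)
  show ?thesis
    unfolding flux_density_def radial_weight_def u using assms
    by (simp add: field_simps power2_eq_square)
qed

lemma abs_mult_le_weighted_squares: "\<bar>A * B\<bar> \<le> 3/4 * A\<^sup>2 + B\<^sup>2 / 3" for A B :: real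
proof -
  have "0 \<le> (3 * \<bar>A\<bar> - 2 * \<bar>B\<bar>)\<^sup>2" by simp
  then show ?thesis by (simp add: abs_mult power2_eq_square algebra_simps)
qed

lemma cross_term_bound:
  fixes s t p R u a b :: real
  assumes "0 < s" "R * u = - (s * t)"
  shows "\<bar>R\<^sup>2 * p * u\<^sup>2 * a * b\<bar> \<le> 3/4 * (u * a)\<^sup>2 + R\<^sup>2 * b\<^sup>2 / s * (p * s^3 * (t\<^sup>2 * p)) / 3"
proof -
  have "(R\<^sup>2 * p * u * b)\<^sup>2 = R\<^sup>2 * b\<^sup>2 * p\<^sup>2 * (R * u)\<^sup>2" by (simp add: algebra_simps power2_eq_square)
  also have "\<dots> = R\<^sup>2 * b\<^sup>2 / s * (p * s^3 * (t\<^sup>2 * p))"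
    unfolding assms(2) using assms(1) by (simp add: field_simps power2_eq_square power3_eq_cube)
  finally have sq: "(R\<^sup>2 * p * u * b)\<^sup>2 = R\<^sup>2 * b\<^sup>2 / s * (p * s^3 * (t\<^sup>2 * p))" .
  have "R\<^sup>2 * p * u\<^sup>2 * a * b = (u * a) * (R\<^sup>2 * p * u * b)"
    by (simp add: algebra_simps power2_eq_square)
  then show ?thesis
    unfolding sq[symmetric] by (simp only: abs_mult_le_weighted_squares)
qed

lemma flux_coefficient_bounds:
  fixes s t p :: real
  assumes s: "0 < s" "s \<le> 1" and t: "99/100 \<le> t" "t \<le> 101/100" and p: "98/100 \<le> p" "p \<le> 1"
  defines "q \<equiv> t\<^sup>2 * p"
  shows "1 / (20 * t) \<le> p * (radial_weight s t q - 2 * s^3 * q / 3) / 2"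
    and "p * (radial_weight s t q + 2 * s^3 * q / 3) / 2 \<le> 5 / t"
    and "1/20 \<le> 1 - s * t + s * q / 2" and "1 - s * t + s * q / 2 \<le> 5"
proof -
  have q: "96/100 \<le> q" "q \<le> 103/100"
  proof -
    have "(99/100)\<^sup>2 * (98/100) \<le> q" "q \<le> (101/100)\<^sup>2 * 1"
      unfolding q_def using t p by (intro mult_mono power_mono; simp)+
    then show "96/100 \<le> q" "q \<le> 103/100" by (simp_all add: power2_eq_square)
  qed
  have tq: "\<bar>t - 1\<bar> \<le> 1/100" "\<bar>q - 1\<bar> \<le> 4/100" using t q by linarith+
  have "1 / (20 * t) \<le> 98/100 * (1/5) / 2"
    using t by (simp add: field_simps)
  also have "\<dots> \<le> p * (radial_weight s t q - 2 * s^3 * q / 3) / 2"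
    using radial_weight_lower[OF s tq] p by (intro divide_right_mono mult_mono) auto
  finally show "1 / (20 * t) \<le> p * (radial_weight s t q - 2 * s^3 * q / 3) / 2" .
  have "0 \<le> 2 * s^3 * q / 3" using s q by simp
  then have "0 \<le> radial_weight s t q + 2 * s^3 * q / 3"
    using radial_weight_lower[OF s tq] by linarith
  then have "p * (radial_weight s t q + 2 * s^3 * q / 3) / 2 \<le> 1 * 8 / 2"
    using radial_weight_upper[of s t q] s t q p by (intro divide_right_mono mult_mono) auto
  also have "\<dots> \<le> 5 / t"
    using t by (simp add: field_simps)
  finally show "p * (radial_weight s t q + 2 * s^3 * q / 3) / 2 \<le> 5 / t" .
  have "s * t \<le> s * (101/100)" "s * (96/100) \<le> s * q" "0 \<le> s * t"
    using s t q by (auto intro: mult_left_mono)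
  moreover have "s * q \<le> 1 * (103/100)" using s q by (intro mult_mono) auto
  ultimately show "1/20 \<le> 1 - s * t + s * q / 2" "1 - s * t + s * q / 2 \<le> 5"
    using s by linarith+
qed

lemma flux_density_comparable:
  fixes M s u R a b g :: real
  assumes s: "0 < s" "s \<le> 1" and R: "0 < R" "0 \<le> M * R" "M * R \<le> 1/100"
    and Ru: "99/100 * s \<le> - (R * u)" "- (R * u) \<le> 101/100 * s" and g: "0 \<le> g"
  defines "I \<equiv> u\<^sup>2 * a\<^sup>2 + R / \<bar>u\<bar> * b\<^sup>2 + g"
  shows "1/20 * I \<le> flux_density M s u R a b g \<and> flux_density M s u R a b g \<le> 5 * I"
proof -
  define t where "t = - (R * u) / s"
  define p where "p = (1 - M * R)\<^sup>2"
  define q where "q = t\<^sup>2 * p"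
  have Rut: "R * u = - (s * t)" using s by (simp add: t_def)
  have t: "99/100 \<le> t" "t \<le> 101/100"
  proof -
    define y where "y = - (R * u)"
    show "99/100 \<le> t" "t \<le> 101/100"
      using Ru s unfolding t_def y_def[symmetric] by (simp_all add: pos_le_divide_eq pos_divide_le_eq)
  qed
  have "(99/100)\<^sup>2 \<le> p" "p \<le> 1\<^sup>2" unfolding p_def using R by (intro power_mono; simp)+
  then have p: "98/100 \<le> p" "p \<le> 1" by (simp_all add: power2_eq_square)
  note bounds = flux_coefficient_bounds[OF s t p, folded q_def]
  define X Y Z where "X = (u * a)\<^sup>2" and "Y = R\<^sup>2 * b\<^sup>2 / s" and "Z = R\<^sup>2 * p * u\<^sup>2 * a * b"
  define \<gamma> where "\<gamma> = 1 - s * t + s * q / 2"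
  have F: "flux_density M s u R a b g = X + Z + Y * (p * radial_weight s t q / 2) + \<gamma> * g"
    unfolding X_def Y_def Z_def \<gamma>_def p_def q_def using flux_density_eq[OF _ _ Rut] s R by simp
  have "0 < t" using t by simp
  moreover have "u = - (s * t) / R" using Rut R by (simp add: field_simps)
  ultimately have "\<bar>u\<bar> = s * t / R" using s R by simp
  then have "R / \<bar>u\<bar> = R\<^sup>2 / (s * t)" using R by (simp add: power2_eq_square)
  then have I: "I = X + Y / t + g"
    unfolding I_def X_def Y_def using s \<open>0 < t\<close> by (simp add: power_mult_distrib)
  have "0 \<le> Y" unfolding Y_def using s by simp
  have Z: "\<bar>Z\<bar> \<le> 3/4 * X + Y * (p * s^3 * q) / 3"
    unfolding X_def Y_def Z_def q_def by (rule cross_term_bound[OF s(1) Rut])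
  have "Y * (1 / (20 * t)) \<le> Y * (p * (radial_weight s t q - 2 * s^3 * q / 3) / 2)"
    using bounds(1) \<open>0 \<le> Y\<close> by (rule mult_left_mono)
  then have lower: "Y / t / 20 \<le> Y * (p * radial_weight s t q / 2) - Y * (p * s^3 * q) / 3"
    by (simp add: algebra_simps)
  have "Y * (p * (radial_weight s t q + 2 * s^3 * q / 3) / 2) \<le> Y * (5 / t)"
    using bounds(2) \<open>0 \<le> Y\<close> by (rule mult_left_mono)
  then have upper: "Y * (p * radial_weight s t q / 2) + Y * (p * s^3 * q) / 3 \<le> 5 * (Y / t)"
    by (simp add: algebra_simps)
  have "1/20 \<le> \<gamma>" "\<gamma> \<le> 5" unfolding \<gamma>_def using bounds(3,4) .
  then have "g / 20 \<le> \<gamma> * g" "\<gamma> * g \<le> 5 * g"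
    using g mult_right_mono by fastforce+
  moreover have "0 \<le> X" "0 \<le> Y / t" using \<open>0 \<le> Y\<close> \<open>0 < t\<close> by (simp_all add: X_def)
  moreover have combine: "1/20 * (x + v + g) \<le> x + z + w + c \<and> x + z + w + c \<le> 5 * (x + v + g)"
    if "g / 20 \<le> c" "c \<le> 5 * g" "0 \<le> x" "0 \<le> v" "\<bar>z\<bar> \<le> 3/4 * x + e"
      "v / 20 \<le> w - e" "w + e \<le> 5 * v" for x v z w e c :: real
    using that abs_le_D1[OF that(5)] abs_le_D2[OF that(5)] unfolding distrib_left
    by (intro conjI) linarith+
  ultimately show ?thesis
    unfolding F I using Z lower upper by blast
qed

section \<open>Integrals over \<open>]-\<infinity>, u\<^sub>0[ \<times> S\<^sup>2\<close>\<close>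

text \<open>Unlike \<open>nn_integral_cmult\<close>, this needs no measurability of \<open>f\<close>.\<close>

lemma nn_integral_cmult_le: "c * integral\<^sup>N M f \<le> (\<integral>\<^sup>+x. c * f x \<partial>M)"
proof -
  have "c * integral\<^sup>N M f = (SUP g\<in>{g. simple_function M g \<and> g \<le> f}. c * integral\<^sup>S M g)"
    unfolding nn_integral_def[of M f] by (simp add: SUP_mult_left_ennreal)
  also have "\<dots> \<le> (\<integral>\<^sup>+x. c * f x \<partial>M)"
  proof (rule SUP_least)
    fix g assume "g \<in> {g. simple_function M g \<and> g \<le> f}"
    then have g: "simple_function M g" "g \<le> f" by auto
    then have "c * integral\<^sup>S M g = (\<integral>\<^sup>+x. c * g x \<partial>M)"
      by (simp add: nn_integral_eq_simple_integral simple_function_compose1)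
    also have "\<dots> \<le> (\<integral>\<^sup>+x. c * f x \<partial>M)"
      using g by (intro nn_integral_mono) (auto simp: le_fun_def intro: mult_left_mono)
    finally show "c * integral\<^sup>S M g \<le> (\<integral>\<^sup>+x. c * f x \<partial>M)" .
  qed
  finally show ?thesis .
qed

lemma nn_integral_cmult_pos:
  assumes "0 < c"
  shows "(\<integral>\<^sup>+x. ennreal c * f x \<partial>M) = ennreal c * integral\<^sup>N M f"
proof (rule antisym)
  have inv: "ennreal c * ennreal (1 / c) = 1" using assms by (simp flip: ennreal_mult)
  have "(\<integral>\<^sup>+x. ennreal c * f x \<partial>M) = ennreal c * (ennreal (1 / c) * (\<integral>\<^sup>+x. ennreal c * f x \<partial>M))"
    by (simp add: mult.assoc[symmetric] inv)
  also have "\<dots> \<le> ennreal c * (\<integral>\<^sup>+x. ennreal (1 / c) * (ennreal c * f x) \<partial>M)"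
    by (intro mult_left_mono nn_integral_cmult_le) auto
  also have "\<dots> = ennreal c * integral\<^sup>N M f"
    by (simp add: mult.assoc[symmetric] mult.commute[of "ennreal (1 / c)"] inv)
  finally show "(\<integral>\<^sup>+x. ennreal c * f x \<partial>M) \<le> ennreal c * integral\<^sup>N M f" .
qed (rule nn_integral_cmult_le)

lemma int_S2_cmult:
  assumes "0 < c"
  shows "int_S2 (\<lambda>\<omega>. ennreal c * h \<omega>) = ennreal c * int_S2 h"
  unfolding int_S2_def
  by (simp add: nn_integral_cmult_pos[OF assms, symmetric] mult.assoc mult.left_commute[of "ennreal c"])

lemma int_H_cmult:
  assumes "0 < c"
  shows "int_H u0 (\<lambda>u \<omega>. c * f u \<omega>) = ennreal c * int_H u0 f"
proof -
  have "int_H u0 (\<lambda>u \<omega>. c * f u \<omega>)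
      = (\<integral>\<^sup>+ u. ennreal c * (indicator {..<u0} u * int_S2 (\<lambda>\<omega>. ennreal (f u \<omega>))) \<partial>lborel)"
    unfolding int_H_def using assms
    by (simp add: ennreal_mult' int_S2_cmult mult.left_commute[of "ennreal c"])
  then show ?thesis unfolding int_H_def by (simp add: nn_integral_cmult_pos[OF assms])
qed

lemma sph_in_sphere: "sph \<theta> \<psi> \<in> sphere 0 1"
proof -
  have "(norm (sph \<theta> \<psi>))\<^sup>2 = (sin \<theta> * cos \<psi>)\<^sup>2 + (sin \<theta> * sin \<psi>)\<^sup>2 + (cos \<theta>)\<^sup>2"
    unfolding sph_def by (simp add: norm_vec_def L2_set_def sum_3 sum_nonneg)
  also have "\<dots> = (sin \<theta>)\<^sup>2 * ((cos \<psi>)\<^sup>2 + (sin \<psi>)\<^sup>2) + (cos \<theta>)\<^sup>2"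
    by (simp only: power_mult_distrib distrib_left)
  finally have "(norm (sph \<theta> \<psi>))\<^sup>2 = 1" by simp
  then show ?thesis using norm_ge_zero[of "sph \<theta> \<psi>"] by (auto simp: power2_eq_1_iff)
qed

lemma int_H_mono:
  assumes "\<And>u \<omega>. u < u0 \<Longrightarrow> \<omega> \<in> sphere 0 1 \<Longrightarrow> f u \<omega> \<le> h u \<omega>"
  shows "int_H u0 f \<le> int_H u0 h"
proof -
  have "int_S2 (\<lambda>\<omega>. ennreal (f u \<omega>)) \<le> int_S2 (\<lambda>\<omega>. ennreal (h u \<omega>))" if "u < u0" for u
    unfolding int_S2_def using that
    by (intro nn_integral_mono mult_right_mono mult_left_mono ennreal_leI assms sph_in_sphere) auto
  then show ?thesis
    unfolding int_H_def by (intro nn_integral_mono) (auto simp: indicator_def)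
qed

lemma int_H_comparable:
  assumes "0 < c" "0 < C"
    and "\<And>u \<omega>. u < u0 \<Longrightarrow> \<omega> \<in> sphere 0 1 \<Longrightarrow> c * f u \<omega> \<le> h u \<omega> \<and> h u \<omega> \<le> C * f u \<omega>"
  shows "ennreal c * int_H u0 f \<le> int_H u0 h \<and> int_H u0 h \<le> ennreal C * int_H u0 f"
  using int_H_mono[of u0 "\<lambda>u \<omega>. c * f u \<omega>" h] int_H_mono[of u0 h "\<lambda>u \<omega>. C * f u \<omega>"] assms
  by (simp add: int_H_cmult)

lemma smooth_up_to_scri_differentiable:
  assumes "smooth_up_to_scri M u0 \<phi>" "x \<in> closOmega M u0"
  shows "\<phi> differentiable (at x)"
proof -
  obtain S where S: "open S" "closOmega M u0 \<subseteq> S" "smooth_on \<phi> S"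
    using assms(1) unfolding smooth_up_to_scri_def by blast
  from S(3) have "\<phi> differentiable_on S" by (cases rule: smooth_on.cases) auto
  then show ?thesis
    using S(1,2) assms(2) by (metis differentiable_on_def at_within_open subsetD)
qed

text \<open>The supremum in \<open>grad_S2_sq\<close> is over a nonempty set bounded by the operator norm
  of the derivative; without differentiability it could be a junk value.\<close>

lemma grad_S2_sq_nonneg:
  assumes "\<phi> differentiable (at (u, R, \<omega>))"
  shows "0 \<le> grad_S2_sq \<phi> u R \<omega>"
proof -
  define D where "D = frechet_derivative \<phi> (at (u, R, \<omega>))"
  define A where "A = {v :: real^3. inner v \<omega> = 0 \<and> norm v = 1}"
  have "bounded_linear D"
    using assms unfolding D_def by (simp add: frechet_derivative_works has_derivative_bounded_linear)
  then obtain K where K: "\<And>v. norm (D v) \<le> norm v * K"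
    using bounded_linear.bounded by blast
  obtain y :: "real^3" where "y \<noteq> 0" "orthogonal \<omega> y"
    using orthogonal_to_vector_exists[of \<omega>] by auto
  then have "y /\<^sub>R norm y \<in> A"
    unfolding A_def by (auto simp: orthogonal_def inner_commute)
  moreover have "bdd_above ((\<lambda>v. (D (0, 0, v))\<^sup>2) ` A)"
  proof (rule bdd_aboveI2)
    fix v assume "v \<in> A"
    then have "\<bar>D (0, 0, v)\<bar> \<le> K"
      using K[of "(0, 0, v)"] by (simp add: A_def norm_Pair)
    then show "(D (0, 0, v))\<^sup>2 \<le> K\<^sup>2"
      using power_mono[of "\<bar>D (0, 0, v)\<bar>" K 2] by simp
  qed
  ultimately have "(D (0, 0, y /\<^sub>R norm y))\<^sup>2 \<le> grad_S2_sq \<phi> u R \<omega>"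
    unfolding grad_S2_sq_def D_def[symmetric] A_def[symmetric] by (rule cSUP_upper)
  then show ?thesis by (meson order_trans zero_le_power2)
qed

lemma scri_flux_density_at_scri: "scri_flux_density M u 0 a b g = u\<^sup>2 * a\<^sup>2 + g"
  unfolding scri_flux_density_def Let_def by (simp add: field_simps power2_eq_square)

lemma energy_scri:
  "energy M 0 u0 \<phi> = int_H u0 (\<lambda>u \<omega>. u\<^sup>2 * (d_u \<phi> u 0 \<omega>)\<^sup>2 + grad_S2_sq \<phi> u 0 \<omega>)"
  unfolding energy_def by (simp add: scri_flux_density_at_scri)

lemma Ienergy_scri:
  "Ienergy M 0 u0 \<phi> = int_H u0 (\<lambda>u \<omega>. u\<^sup>2 * (d_u \<phi> u 0 \<omega>)\<^sup>2 + grad_S2_sq \<phi> u 0 \<omega>)"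
  unfolding Ienergy_def Rsurf_def by simp

lemma energy_comparable_Ienergy:
  assumes M: "0 < M" and s: "0 < s" "s \<le> 1" and "u0 \<le> 0" and \<phi>: "smooth_up_to_scri M u0 \<phi>"
    and far: "\<And>u. u < u0 \<Longrightarrow> far_regime M s u"
  shows "ennreal (1/20) * Ienergy M s u0 \<phi> \<le> energy M s u0 \<phi> \<and>
    energy M s u0 \<phi> \<le> ennreal 5 * Ienergy M s u0 \<phi>"
proof -
  have pointwise: "1/20 * I \<le> F \<and> F \<le> 5 * I"
    if "u < u0" "\<omega> \<in> sphere 0 1" and R: "R = Rsurf M s u"
      and "I = u\<^sup>2 * (d_u \<phi> u R \<omega>)\<^sup>2 + R / \<bar>u\<bar> * (d_R \<phi> u R \<omega>)\<^sup>2 + grad_S2_sq \<phi> u R \<omega>"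
      and "F = flux_density M s u R (d_u \<phi> u R \<omega>) (d_R \<phi> u R \<omega>) (grad_S2_sq \<phi> u R \<omega>)"
    for u \<omega> R I F
  proof -
    have "(u, R, \<omega>) \<in> closOmega M u0"
      unfolding R using Rsurf_in_closOmega M s that(1,2) \<open>u0 \<le> 0\<close> by simp
    then have "0 \<le> grad_S2_sq \<phi> u R \<omega>"
      by (intro grad_S2_sq_nonneg smooth_up_to_scri_differentiable[OF \<phi>])
    moreover have "0 < R" "M * R \<le> 1/100" "99/100 * s \<le> - (R * u)" "- (R * u) \<le> 101/100 * s"
      using far[OF that(1)] unfolding R far_regime_def by auto
    moreover have "0 \<le> M * R" using M \<open>0 < R\<close> by simp
    ultimately show ?thesis
      unfolding that(4,5) using flux_density_comparable[OF s] by blast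
  qed
  have "s \<noteq> 0" using s by simp
  show ?thesis
    unfolding energy_def Ienergy_def Let_def if_not_P[OF \<open>s \<noteq> 0\<close>]
    by (rule int_H_comparable) (use pointwise[OF _ _ refl refl refl] in auto)
qed

theorem proposition1:
  fixes M :: real
  assumes "M > 0"
  shows "\<exists>U < 0. \<exists>c C. 0 < c \<and> c \<le> C \<and>
    (\<forall>u0 < U. \<forall>s \<in> {0..1}. \<forall>\<phi>. smooth_up_to_scri M u0 \<phi> \<longrightarrow>
        ennreal c * Ienergy M s u0 \<phi> \<le> energy M s u0 \<phi> \<and>
        energy M s u0 \<phi> \<le> ennreal C * Ienergy M s u0 \<phi>) \<and>
    (\<forall>u0 < U. \<forall>\<phi>. smooth_up_to_scri M u0 \<phi> \<longrightarrow>
        energy M 0 u0 \<phi> =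
          int_H u0 (\<lambda>u \<omega>. u\<^sup>2 * (d_u \<phi> u 0 \<omega>)\<^sup>2 + grad_S2_sq \<phi> u 0 \<omega>))"
proof -
  obtain U where "U < 0" and far: "\<And>s u. 0 < s \<Longrightarrow> s \<le> 1 \<Longrightarrow> u < U \<Longrightarrow> far_regime M s u"
    using Rsurf_asymptotics[OF assms] by blast
  have "ennreal (1/20) * Ienergy M s u0 \<phi> \<le> energy M s u0 \<phi> \<and>
      energy M s u0 \<phi> \<le> ennreal 5 * Ienergy M s u0 \<phi>"
    if "u0 < U" "s \<in> {0..1}" "smooth_up_to_scri M u0 \<phi>" for u0 s \<phi>
  proof (cases "s = 0")
    case True
    then have "energy M s u0 \<phi> = Ienergy M s u0 \<phi>" by (simp add: energy_scri Ienergy_scri)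
    then show ?thesis
      using mult_right_mono[of "ennreal (1/20)" 1] mult_right_mono[of 1 "ennreal 5"] by simp
  next
    case False
    with that \<open>U < 0\<close> show ?thesis
      by (intro energy_comparable_Ienergy assms far) auto
  qed
  then show ?thesis
    using \<open>U < 0\<close> energy_scri by (intro exI[of _ U] conjI exI[of _ "1/20"] exI[of _ 5]) auto
qed

end
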